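(* In the setting below, the Jacobian matrix $L=\left(\frac{\partial B_i}{\partial w_j}\right)_{i,j=1}^n$ of $(B_1,\dots,B_n)$ with respect to $(w_1,\dots,w_n)$ is, at every point of $W$, symmetric, strictly diagonally dominant (i.e. $|\partial B_i/\partial w_i|>\sum_{j\ne i}|\partial B_i/\partial w_j|$ for each $i$), and negative definite.
   Context: Setting: $T^*$ is a triangulation of a closed surface $S$ with vertex set $T^0$; $\Sigma=S\setminus N(T^0)$ where $N(T^0)$ is a small open regular disjoint neighborhood of $T^0$; $\Sigma$ has boundary components labeled $1,\dots,n$. $T=T^*\cap\Sigma$ is the ideal triangulation with ideal edges $E$ and ideal faces $F$; $ij$ denotes the ideal edge between boundary components $i,j$ and $ijk$ the ideal face adjacent to boundary components $i,j,k$. For each face $ijk$ and positive lengths $l_{ij},l_{jk},l_{ki}$ there is a right-angled hyperbolic hexagon, unique up to isometry, with pairwise non-adjacent sides of these lengths; $\theta_i^f$ is the length of the side of the hexagon of $f=ijk$ opposite to the side of length $l_{jk}$, i.e. $\cosh\theta_i^f=\frac{\cosh l_{jk}+\cosh l_{ki}\cosh l_{ij}}{\sinh l_{ki}\sinh l_{ij}}$. Fix $l^0\in\mathbb{R}_+^{|E|}$. $W=\{w\in\mathbb{R}^n: w_i+w_j>-\ln\cosh\frac{l^0_{ij}}{2}\ \forall ij\in E\}$; for $w\in W$, $l=w*l^0$ is given by $\cosh\frac{l_{ij}}{2}=e^{w_i+w_j}\cosh\frac{l^0_{ij}}{2}$, and $B_i(w)=\sum_{f\in F_i}\theta_i^f$,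 where $F_i$ is the set of faces adjacent to boundary component $i$ ($B_i$ is the length of boundary component $i$ of the glued hyperbolic surface). *)

theory Defs
  imports "HOL-Analysis.Analysis"
begin

text \<open>Boundary components of the surface (= vertices of the triangulation) are the
  elements of a finite type 'n; n = CARD('n). Ideal edges are 2-element vertex sets,
  ideal faces 3-element vertex sets (simplicial triangulation, notation ij, ijk).\<close>

definition link_rel :: "'n set set \<Rightarrow> 'n \<Rightarrow> ('n \<times> 'n) set" where
  "link_rel F v = {(a, b). {v, a, b} \<in> F \<and> card {v, a, b} = 3}"

definition closed_surface_triangulation :: "'n::finite set set \<Rightarrow> 'n set set \<Rightarrow> bool" where
  "closed_surface_triangulation E F \<longleftrightarrow>
     (\<forall>f\<in>F. card f = 3) \<and>
     E = {e. card e = 2 \<and> (\<exists>f\<in>F. e \<subseteq> f)} \<and>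
     (\<forall>e\<in>E. card {f\<in>F. e \<subseteq> f} = 2) \<and>
     (\<forall>v::'n. \<exists>f\<in>F. v \<in> f) \<and>
     (\<forall>v a b. {v, a} \<in> E \<and> {v, b} \<in> E \<longrightarrow> (a, b) \<in> (link_rel F v)\<^sup>*)"

definition edge_len :: "('n set \<Rightarrow> real) \<Rightarrow> real^'n \<Rightarrow> 'n \<Rightarrow> 'n \<Rightarrow> real" where
  "edge_len l0 w i j = 2 * arcosh (exp (w$i + w$j) * cosh (l0 {i, j} / 2))"

definition Wdom :: "'n set set \<Rightarrow> ('n set \<Rightarrow> real) \<Rightarrow> (real^'n) set" where
  "Wdom E l0 = {w. \<forall>i j. {i, j} \<in> E \<longrightarrow> w$i + w$j > - ln (cosh (l0 {i, j} / 2))}"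

text \<open>Generalised angle theta_i^f of face f = ijk at i: the side of the right-angled
  hexagon opposite to the side of length l_jk, i.e.
  cosh theta = (cosh l_jk + cosh l_ki cosh l_ij) / (sinh l_ki sinh l_ij).\<close>
definition theta :: "('n set \<Rightarrow> real) \<Rightarrow> real^'n \<Rightarrow> 'n set \<Rightarrow> 'n \<Rightarrow> real" where
  "theta l0 w f i =
     (let j = SOME j. j \<in> f - {i}; k = SOME k. k \<in> f - {i, j} in
      arcosh ((cosh (edge_len l0 w j k) + cosh (edge_len l0 w k i) * cosh (edge_len l0 w i j))
              / (sinh (edge_len l0 w k i) * sinh (edge_len l0 w i j))))"

definition Bvec :: "'n set set \<Rightarrow> ('n set \<Rightarrow> real) \<Rightarrow> real^'n \<Rightarrow> real^'n" where
  "Bvec F l0 w = (\<chi> i. \<Sum>f\<in>{f\<in>F. i \<in> f}. theta l0 w f i)"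

end

(* The boundary length B_i is a sum of hexagon sides theta_i^f over the faces f at i, so its
   Jacobian is a sum of contributions of single faces. For a face ijk let A, B, C be the cosh of
   the edges opposite i, j, k and D = A^2 + B^2 + C^2 + 2ABC - 1. Differentiating the hexagon
   cosine law and using dl_ij/dw_i = 2 coth (l_ij/2) gives
     d theta_i / d w_j = 2 (C - A - B - 1) / ((C - 1) sqrt D),
   which is symmetric in i and j because D is, and
     d theta_i / d w_i = - 2 (B + AC) / ((C - 1) sqrt D) - 2 (C + AB) / ((B - 1) sqrt D).
   As A, B, C > 1 we have |C - A - B - 1| < B + AC, so every face contributes a row whose diagonal
   entry is negative and strictly dominant. Summing over the faces yields a symmetric matrix with
   negative, strictly dominant diagonal, which is negative definite since
   2 |x_i x_j| <= x_i^2 + x_j^2. *)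

theory Submission
  imports Defs
begin

lemma symmetric_diag_dominant_neg_definite:
  fixes L :: "real^'n^'n" and x :: "real^'n"
  assumes sym: "transpose L = L" and dom: "\<And>i. L$i$i + (\<Sum>j\<in>UNIV - {i}. \<bar>L$i$j\<bar>) < 0"
    and "x \<noteq> 0"
  shows "x \<bullet> (L *v x) < 0"
proof -
  define R where "R i = (\<Sum>j\<in>UNIV - {i}. \<bar>L$i$j\<bar>)" for i
  have am_gm: "L$i$j * x$i * x$j \<le> \<bar>L$i$j\<bar> * ((x$i)\<^sup>2 + (x$j)\<^sup>2) / 2" for i j
  proof -
    have "2 * \<bar>x$i * x$j\<bar> \<le> (x$i)\<^sup>2 + (x$j)\<^sup>2"
      using sum_squares_bound[of "\<bar>x$i\<bar>" "\<bar>x$j\<bar>"] by (simp add: abs_mult)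
    have "L$i$j * (x$i * x$j) \<le> \<bar>L$i$j\<bar> * \<bar>x$i * x$j\<bar>"
      by (metis abs_ge_self abs_mult)
    also have "\<dots> \<le> \<bar>L$i$j\<bar> * (((x$i)\<^sup>2 + (x$j)\<^sup>2) / 2)"
      using \<open>2 * \<bar>x$i * x$j\<bar> \<le> _\<close> by (intro mult_left_mono) auto
    finally show ?thesis by (simp add: mult.assoc)
  qed
  have columns: "(\<Sum>i\<in>UNIV. \<Sum>j\<in>UNIV - {i}. \<bar>L$i$j\<bar> * (x$j)\<^sup>2) = (\<Sum>i\<in>UNIV. R i * (x$i)\<^sup>2)"
  proof -
    have "(\<Sum>i\<in>UNIV. \<Sum>j\<in>UNIV - {i}. \<bar>L$i$j\<bar> * (x$j)\<^sup>2)
        = (\<Sum>i\<in>UNIV. \<Sum>j\<in>UNIV. \<bar>L$i$j\<bar> * (x$j)\<^sup>2) - (\<Sum>i\<in>UNIV. \<bar>L$i$i\<bar> * (x$i)\<^sup>2)"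
      by (simp add: sum_diff1 sum_subtractf)
    also have "\<dots> = (\<Sum>j\<in>UNIV. \<Sum>i\<in>UNIV. \<bar>L$j$i\<bar> * (x$j)\<^sup>2) - (\<Sum>i\<in>UNIV. \<bar>L$i$i\<bar> * (x$i)\<^sup>2)"
      using sym by (subst sum.swap) (simp add: transpose_def vec_eq_iff)
    also have "\<dots> = (\<Sum>i\<in>UNIV. R i * (x$i)\<^sup>2)"
      by (simp add: R_def sum_diff1 left_diff_distrib sum_subtractf sum_distrib_right)
    finally show ?thesis .
  qed
  have "x \<bullet> (L *v x) = (\<Sum>i\<in>UNIV. \<Sum>j\<in>UNIV. L$i$j * x$i * x$j)"
    by (simp add: inner_vec_def matrix_vector_mult_def sum_distrib_left mult_ac)
  also have "\<dots> = (\<Sum>i\<in>UNIV. L$i$i * (x$i)\<^sup>2 + (\<Sum>j\<in>UNIV - {i}. L$i$j * x$i * x$j))"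
    by (simp add: sum_diff1 power2_eq_square mult_ac)
  also have "\<dots> \<le> (\<Sum>i\<in>UNIV. L$i$i * (x$i)\<^sup>2 + (\<Sum>j\<in>UNIV - {i}. \<bar>L$i$j\<bar> * ((x$i)\<^sup>2 + (x$j)\<^sup>2) / 2))"
    by (intro sum_mono add_left_mono am_gm)
  also have "\<dots> = (\<Sum>i\<in>UNIV. L$i$i * (x$i)\<^sup>2) + (\<Sum>i\<in>UNIV. R i * (x$i)\<^sup>2) / 2
      + (\<Sum>i\<in>UNIV. \<Sum>j\<in>UNIV - {i}. \<bar>L$i$j\<bar> * (x$j)\<^sup>2) / 2"
    by (simp add: R_def distrib_left add_divide_distrib sum.distrib sum_divide_distrib
        sum_distrib_right)
  also have "\<dots> = (\<Sum>i\<in>UNIV. (L$i$i + R i) * (x$i)\<^sup>2)"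
    unfolding columns by (simp add: sum.distrib distrib_right)
  also have "\<dots> < 0"
  proof -
    obtain k where "x$k \<noteq> 0" using \<open>x \<noteq> 0\<close> by (metis vec_eq_iff zero_index)
    have "(\<Sum>i\<in>UNIV. (L$i$i + R i) * (x$i)\<^sup>2) < (\<Sum>i\<in>(UNIV :: 'n set). 0)"
    proof (rule sum_strict_mono_ex1)
      show "\<forall>i\<in>UNIV. (L$i$i + R i) * (x$i)\<^sup>2 \<le> 0"
        using dom by (simp add: R_def mult_nonpos_nonneg less_imp_le)
      show "\<exists>i\<in>UNIV. (L$i$i + R i) * (x$i)\<^sup>2 < 0"
        using dom[of k, folded R_def] \<open>x$k \<noteq> 0\<close> by (intro bexI[of _ k]) (simp_all add: mult_neg_pos)
    qed simp
    then show ?thesis by simp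
  qed
  finally show ?thesis .
qed

lemma has_derivative_vec_componentwise:
  fixes f :: "'a::real_normed_vector \<Rightarrow> real^'n"
  assumes "\<And>i. ((\<lambda>x. f x $ i) has_derivative (\<lambda>h. f' h $ i)) (at x)"
  shows "(f has_derivative f') (at x)"
  by (rule iffD2[OF has_derivative_componentwise_within])
    (use assms in \<open>auto simp: Basis_vec_def cart_eq_inner_axis[symmetric]\<close>)

lemma some_choice_in_triangle:
  assumes "f = {i, j, k}" "distinct [i, j, k]" "\<And>a b. P a b = P b a"
  shows "(let a = SOME a. a \<in> f - {i}; b = SOME b. b \<in> f - {i, a} in P a b) = P j k"
proof -
  define a where "a = (SOME a. a \<in> f - {i})"
  define b where "b = (SOME b. b \<in> f - {i, a})"
  have "a \<in> f - {i}" unfolding a_def by (rule someI[of _ j]) (use assms in auto)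
  moreover have "b \<in> f - {i, a}" unfolding b_def by (rule someI_ex) (use assms \<open>a \<in> f - {i}\<close> in auto)
  ultimately have "(a = j \<and> b = k) \<or> (a = k \<and> b = j)" using assms(1) by auto
  then show ?thesis unfolding Let_def a_def[symmetric] b_def[symmetric] using assms(3) by auto
qed

definition third_vertex :: "'n set \<Rightarrow> 'n \<Rightarrow> 'n \<Rightarrow> 'n" where
  "third_vertex f i j = (THE k. k \<in> f - {i, j})"

lemma third_vertex_eq: "distinct [i, j, k] \<Longrightarrow> third_vertex {i, j, k} i j = k"
  unfolding third_vertex_def by (rule the_equality) auto

lemma third_vertex_commute: "third_vertex f j i = third_vertex f i j"
  unfolding third_vertex_def by (simp add: insert_commute)

lemma triangle_at_vertex:
  assumes "card f = 3" "i \<in> f"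
  obtains j k where "f = {i, j, k}" "distinct [i, j, k]"
proof -
  have "card (f - {i}) = 2" using assms by simp
  then obtain j k where "f - {i} = {j, k}" "j \<noteq> k" by (meson card_2_iff)
  then show ?thesis using that[of j k] assms(2) by auto
qed

lemma triangle_third_vertex:
  assumes "card f = 3" "i \<in> f" "m \<in> f" "m \<noteq> i"
  shows "f = {i, m, third_vertex f i m}" "distinct [i, m, third_vertex f i m]"
proof -
  obtain j k where f: "f = {i, j, k}" "distinct [i, j, k]" using triangle_at_vertex assms(1,2) .
  have "m = j \<or> m = k" using f assms(3,4) by auto
  then have "third_vertex f i m = (if m = j then k else j)"
    using f third_vertex_eq[of i j k] third_vertex_eq[of i k j] by (auto simp: insert_commute)
  then show "f = {i, m, third_vertex f i m}" "distinct [i, m, third_vertex f i m]"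
    using f \<open>m = j \<or> m = k\<close> by auto
qed

definition hexagon_side :: "real \<Rightarrow> real \<Rightarrow> real \<Rightarrow> real" where
  "hexagon_side a b c = arcosh ((cosh a + cosh b * cosh c) / (sinh b * sinh c))"

definition hexagon_disc :: "real \<Rightarrow> real \<Rightarrow> real \<Rightarrow> real" where
  "hexagon_disc A B C = A\<^sup>2 + B\<^sup>2 + C\<^sup>2 + 2 * A * B * C - 1"

lemma hexagon_disc_commute: "hexagon_disc A C B = hexagon_disc A B C" "hexagon_disc B A C = hexagon_disc A B C"
  unfolding hexagon_disc_def by (simp_all add: algebra_simps)

lemma hexagon_cosh_side_gt_1:
  fixes a b c :: real
  assumes "b > 0" "c > 0"
  shows "(cosh a + cosh b * cosh c) / (sinh b * sinh c) > 1"
proof -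
  have "sinh b * sinh c < cosh b * cosh c"
    using cosh_diff[of b c] cosh_real_pos[of "b - c"] by simp
  then have "sinh b * sinh c < cosh a + cosh b * cosh c"
    using cosh_real_pos[of a] by linarith
  moreover have "sinh b * sinh c > 0" using assms by simp
  ultimately show ?thesis by (simp add: pos_less_divide_eq)
qed

lemma hexagon_cosh_side_sq_minus_1:
  fixes a b c :: real
  assumes "b > 0" "c > 0"
  shows "((cosh a + cosh b * cosh c) / (sinh b * sinh c))\<^sup>2 - 1
         = hexagon_disc (cosh a) (cosh b) (cosh c) / (sinh b * sinh c)\<^sup>2"
  using assms cosh_square_eq[of b] cosh_square_eq[of c] unfolding hexagon_disc_def
  by (simp add: field_simps power2_eq_square) algebra

lemma hexagon_disc_cosh_pos:
  fixes a b c :: real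
  assumes "b > 0" "c > 0"
  shows "hexagon_disc (cosh a) (cosh b) (cosh c) > 0"
proof -
  have "((cosh a + cosh b * cosh c) / (sinh b * sinh c))\<^sup>2 > 1"
    using hexagon_cosh_side_gt_1[OF assms] by (simp add: one_less_power)
  then have "hexagon_disc (cosh a) (cosh b) (cosh c) / (sinh b * sinh c)\<^sup>2 > 0"
    unfolding hexagon_cosh_side_sq_minus_1[OF assms, symmetric] by simp
  then show ?thesis by (simp add: zero_less_divide_iff)
qed

lemma hexagon_side_has_derivative:
  fixes ga gb gc :: "'a::real_normed_vector \<Rightarrow> real"
  assumes "(ga has_derivative ga') (at x)" "(gb has_derivative gb') (at x)"
    "(gc has_derivative gc') (at x)"
    and "gb x > 0" "gc x > 0"
  defines "A \<equiv> cosh (ga x)" and "B \<equiv> cosh (gb x)" and "C \<equiv> cosh (gc x)"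
  shows "((\<lambda>x. hexagon_side (ga x) (gb x) (gc x)) has_derivative
     (\<lambda>h. (sinh (ga x) * ga' h - (C + A * B) / sinh (gb x) * gb' h
           - (B + A * C) / sinh (gc x) * gc' h) / sqrt (hexagon_disc A B C))) (at x)"
proof -
  have cosh': "(cosh has_real_derivative sinh y) (at y)"
    and sinh': "(sinh has_real_derivative cosh y) (at y)" for y :: real
    by (auto intro!: derivative_eq_intros)
  define q where "q y = (cosh (ga y) + cosh (gb y) * cosh (gc y)) / (sinh (gb y) * sinh (gc y))" for y
  define u where "u = sqrt (hexagon_disc A B C)"
  define sb sc where "sb = sinh (gb x)" and "sc = sinh (gc x)"
  have "sb > 0" "sc > 0" using assms(4,5) by (simp_all add: sb_def sc_def)
  have "u > 0" unfolding u_def A_def B_def C_def using hexagon_disc_cosh_pos[OF assms(4,5)] by simp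
  have "B\<^sup>2 = 1 + sb\<^sup>2" "C\<^sup>2 = 1 + sc\<^sup>2"
    unfolding B_def C_def sb_def sc_def by (simp_all add: cosh_square_eq)
  have "q x > 1" unfolding q_def using hexagon_cosh_side_gt_1 assms(4,5) .
  have sqrt_q: "sqrt ((q x)\<^sup>2 - 1) = u / (sb * sc)"
    using \<open>sb > 0\<close> \<open>sc > 0\<close> unfolding q_def hexagon_cosh_side_sq_minus_1[OF assms(4,5)]
    by (simp add: u_def A_def B_def C_def sb_def sc_def real_sqrt_divide)
  have dq: "(q has_derivative
      (\<lambda>h. (sinh (ga x) * ga' h - (C + A * B) / sb * gb' h - (B + A * C) / sc * gc' h) / (sb * sc))) (at x)"
    unfolding q_def
    apply (rule has_derivative_eq_rhs)
     apply (rule has_derivative_divide has_derivative_add has_derivative_mult assms(1-3)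
        DERIV_compose_FDERIV[OF cosh'] DERIV_compose_FDERIV[OF sinh'])+
    using \<open>sb > 0\<close> \<open>sc > 0\<close> \<open>B\<^sup>2 = 1 + sb\<^sup>2\<close> \<open>C\<^sup>2 = 1 + sc\<^sup>2\<close>
    unfolding A_def[symmetric] B_def[symmetric] C_def[symmetric] sb_def[symmetric] sc_def[symmetric]
    by (simp_all add: fun_eq_iff field_simps) algebra
  show ?thesis
    unfolding hexagon_side_def q_def[symmetric] u_def[symmetric] sb_def[symmetric] sc_def[symmetric]
    by (rule has_derivative_eq_rhs[OF DERIV_compose_FDERIV[OF arcosh_real_has_field_derivative dq]])
      (use \<open>q x > 1\<close> \<open>sb > 0\<close> \<open>sc > 0\<close> \<open>u > 0\<close> in \<open>simp_all add: sqrt_q fun_eq_iff field_simps\<close>)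
qed

definition admissible_edge :: "('n set \<Rightarrow> real) \<Rightarrow> real^'n \<Rightarrow> 'n \<Rightarrow> 'n \<Rightarrow> bool" where
  "admissible_edge l0 w i j \<longleftrightarrow> exp (w$i + w$j) * cosh (l0 {i, j} / 2) > 1"

lemma Wdom_imp_admissible_edge:
  assumes "w \<in> Wdom E l0" "{i, j} \<in> E"
  shows "admissible_edge l0 w i j"
proof -
  have "w$i + w$j > - ln (cosh (l0 {i, j} / 2))" using assms unfolding Wdom_def by blast
  then have "exp (w$i + w$j) > inverse (cosh (l0 {i, j} / 2))"
    by (metis exp_less_cancel_iff exp_ln exp_minus cosh_real_pos)
  then show ?thesis
    unfolding admissible_edge_def using cosh_real_pos by (simp add: field_simps)
qed

lemma edge_len_commute: "edge_len l0 w j i = edge_len l0 w i j"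
  unfolding edge_len_def by (simp add: insert_commute add.commute)

lemma edge_len_pos: "admissible_edge l0 w i j \<Longrightarrow> edge_len l0 w i j > 0"
  unfolding admissible_edge_def edge_len_def by simp

lemma edge_len_has_derivative:
  fixes w :: "real^'n"
  assumes "admissible_edge l0 w i j"
  defines "l \<equiv> edge_len l0 w i j"
  shows "((\<lambda>w. edge_len l0 w i j) has_derivative
           (\<lambda>h. 2 * (cosh l + 1) / sinh l * (h$i + h$j))) (at w)"
proof -
  define c where "c = cosh (l0 {i, j} / 2)"
  define s where "s = exp (w$i + w$j) * c"
  have "s > 1" using assms(1) unfolding admissible_edge_def s_def c_def .
  then have "sqrt (s\<^sup>2 - 1) > 0" by (simp add: one_less_power)
  have cosh_l: "cosh l = 2 * s\<^sup>2 - 1" and sinh_l: "sinh l = 2 * sqrt (s\<^sup>2 - 1) * s"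
    unfolding l_def edge_len_def s_def[unfolded c_def, symmetric]
    using \<open>s > 1\<close> by (simp_all add: cosh_double_cosh sinh_double sinh_arcosh_real)
  have inner: "((\<lambda>w::real^'n. exp (w$i + w$j) * c) has_derivative (\<lambda>h. (h$i + h$j) * s)) (at w)"
    unfolding s_def
    by (auto intro!: derivative_eq_intros bounded_linear.has_derivative[OF bounded_linear_vec_nth])
  have coeff: "2 * (cosh l + 1) / sinh l = 2 * s / sqrt (s\<^sup>2 - 1)"
    using \<open>s > 1\<close> \<open>sqrt (s\<^sup>2 - 1) > 0\<close> by (simp add: cosh_l sinh_l field_simps power2_eq_square)
  note arcosh' = arcosh_real_has_field_derivative[OF \<open>s > 1\<close>[unfolded s_def]]
  have "((\<lambda>w. 2 * arcosh (exp (w$i + w$j) * c)) has_derivative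
          (\<lambda>h. 2 * ((h$i + h$j) * s * (1 / sqrt (s\<^sup>2 - 1))))) (at w)"
    using has_derivative_mult_right[OF DERIV_compose_FDERIV[OF arcosh' inner], of 2] unfolding s_def .
  then show ?thesis
    unfolding edge_len_def c_def[symmetric] coeff by (simp add: ac_simps)
qed

definition face_angle :: "('n set \<Rightarrow> real) \<Rightarrow> real^'n \<Rightarrow> 'n \<Rightarrow> 'n \<Rightarrow> 'n \<Rightarrow> real" where
  "face_angle l0 w i j k = hexagon_side (edge_len l0 w j k) (edge_len l0 w k i) (edge_len l0 w i j)"

(* In the face ijk, angle_partial i j k is the partial derivative of theta_i by w_j, and
   angle_self_partial i j k is the part of the partial derivative of theta_i by w_i that comes
   from the edge ij. *)
definition angle_partial :: "('n set \<Rightarrow> real) \<Rightarrow> real^'n \<Rightarrow> 'n \<Rightarrow> 'n \<Rightarrow> 'n \<Rightarrow> real" where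
  "angle_partial l0 w i j k =
     (let A = cosh (edge_len l0 w j k); B = cosh (edge_len l0 w k i); C = cosh (edge_len l0 w i j)
      in 2 * (C - A - B - 1) / ((C - 1) * sqrt (hexagon_disc A B C)))"

definition angle_self_partial :: "('n set \<Rightarrow> real) \<Rightarrow> real^'n \<Rightarrow> 'n \<Rightarrow> 'n \<Rightarrow> 'n \<Rightarrow> real" where
  "angle_self_partial l0 w i j k =
     (let A = cosh (edge_len l0 w j k); B = cosh (edge_len l0 w k i); C = cosh (edge_len l0 w i j)
      in - (2 * (B + A * C) / ((C - 1) * sqrt (hexagon_disc A B C))))"

lemma face_angle_has_derivative:
  fixes w :: "real^'n"
  assumes "admissible_edge l0 w i j" "admissible_edge l0 w j k" "admissible_edge l0 w k i"
  shows "((\<lambda>w. face_angle l0 w i j k) has_derivative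
           (\<lambda>h. (angle_self_partial l0 w i j k + angle_self_partial l0 w i k j) * h$i
                + angle_partial l0 w i j k * h$j + angle_partial l0 w i k j * h$k)) (at w)"
proof -
  define A B C where "A = cosh (edge_len l0 w j k)" and "B = cosh (edge_len l0 w k i)"
    and "C = cosh (edge_len l0 w i j)"
  define sa sb sc where "sa = sinh (edge_len l0 w j k)" and "sb = sinh (edge_len l0 w k i)"
    and "sc = sinh (edge_len l0 w i j)"
  define u where "u = sqrt (hexagon_disc A B C)"
  have pos: "edge_len l0 w j k > 0" "edge_len l0 w k i > 0" "edge_len l0 w i j > 0"
    using assms by (simp_all add: edge_len_pos)
  then have "sa > 0" "sb > 0" "sc > 0" "B > 1" "C > 1"
    by (simp_all add: sa_def sb_def sc_def B_def C_def order_less_le cosh_real_ge_1)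
  have "u > 0" unfolding u_def A_def B_def C_def using hexagon_disc_cosh_pos pos by simp
  have "A\<^sup>2 = 1 + sa\<^sup>2" "B\<^sup>2 = 1 + sb\<^sup>2" "C\<^sup>2 = 1 + sc\<^sup>2"
    by (simp_all add: A_def B_def C_def sa_def sb_def sc_def cosh_square_eq)
  have via_b: "(C + A * B) / sb * (2 * (B + 1) / sb * t) = 2 * (C + A * B) / (B - 1) * t" for t
    using \<open>sb > 0\<close> \<open>B > 1\<close> \<open>B\<^sup>2 = 1 + sb\<^sup>2\<close>
    by (simp add: field_simps power2_eq_square) algebra
  have via_c: "(B + A * C) / sc * (2 * (C + 1) / sc * t) = 2 * (B + A * C) / (C - 1) * t" for t
    using \<open>sc > 0\<close> \<open>C > 1\<close> \<open>C\<^sup>2 = 1 + sc\<^sup>2\<close>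
    by (simp add: field_simps power2_eq_square) algebra
  obtain p q where "B = p + 1" "C = q + 1" "p > 0" "q > 0"
    using \<open>B > 1\<close> \<open>C > 1\<close> by (metis add.commute diff_add_cancel diff_gt_0_iff_gt)
  note D = hexagon_side_has_derivative[OF edge_len_has_derivative[OF assms(2)]
      edge_len_has_derivative[OF assms(3)] edge_len_has_derivative[OF assms(1)] pos(2,3)]
  show ?thesis
    unfolding face_angle_def
    apply (rule has_derivative_eq_rhs[OF D])
    unfolding angle_partial_def angle_self_partial_def Let_def edge_len_commute[of _ _ k j]
      edge_len_commute[of _ _ j i] edge_len_commute[of _ _ i k]
    unfolding A_def[symmetric] B_def[symmetric] C_def[symmetric] sa_def[symmetric] sb_def[symmetric]
      sc_def[symmetric] hexagon_disc_commute(1)[of A C B] u_def[symmetric] via_b via_c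
    using \<open>sa > 0\<close> \<open>u > 0\<close> \<open>B = p + 1\<close> \<open>C = q + 1\<close> \<open>p > 0\<close> \<open>q > 0\<close>
    by (simp add: fun_eq_iff field_simps)
qed

lemma face_angle_commute: "face_angle l0 w i k j = face_angle l0 w i j k"
  unfolding face_angle_def hexagon_side_def edge_len_commute[of _ _ k j] edge_len_commute[of _ _ j i]
    edge_len_commute[of _ _ i k]
  by (simp add: ac_simps)

lemma theta_eq_face_angle:
  assumes "f = {i, j, k}" "distinct [i, j, k]"
  shows "theta l0 w f i = face_angle l0 w i j k"
proof -
  have "theta l0 w f i
        = (let a = SOME a. a \<in> f - {i}; b = SOME b. b \<in> f - {i, a} in face_angle l0 w i a b)"
    unfolding theta_def face_angle_def hexagon_side_def ..
  also have "\<dots> = face_angle l0 w i j k"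
    using some_choice_in_triangle[OF assms] face_angle_commute by metis
  finally show ?thesis .
qed

lemma angle_partial_commute: "angle_partial l0 w j i k = angle_partial l0 w i j k"
  unfolding angle_partial_def Let_def edge_len_commute[of _ _ j i] edge_len_commute[of _ _ k j]
    edge_len_commute[of _ _ i k] hexagon_disc_commute(2)[of "cosh (edge_len l0 w k i)"]
  by (simp add: algebra_simps)

lemma angle_partial_dominated:
  assumes "admissible_edge l0 w i j" "admissible_edge l0 w j k" "admissible_edge l0 w k i"
  shows "\<bar>angle_partial l0 w i j k\<bar> < - angle_self_partial l0 w i j k"
proof -
  define A B C where "A = cosh (edge_len l0 w j k)" and "B = cosh (edge_len l0 w k i)"
    and "C = cosh (edge_len l0 w i j)"
  have pos: "edge_len l0 w j k > 0" "edge_len l0 w k i > 0" "edge_len l0 w i j > 0"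
    using assms by (simp_all add: edge_len_pos)
  then have "A > 1" "B > 1" "C > 1"
    by (simp_all add: A_def B_def C_def order_less_le cosh_real_ge_1)
  define d where "d = (C - 1) * sqrt (hexagon_disc A B C)"
  have "d > 0"
    using \<open>C > 1\<close> hexagon_disc_cosh_pos[OF pos(2,3)] by (simp add: d_def A_def B_def C_def)
  have "A < A * C" "C < A * C"
    using \<open>A > 1\<close> \<open>C > 1\<close> by simp_all
  then have "\<bar>C - A - B - 1\<bar> < B + A * C"
    using \<open>A > 1\<close> \<open>B > 1\<close> \<open>C > 1\<close> unfolding abs_less_iff by linarith
  then have "\<bar>2 * (C - A - B - 1)\<bar> / d < 2 * (B + A * C) / d"
    using \<open>d > 0\<close> by (simp add: abs_mult divide_strict_right_mono)
  then show ?thesis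
    unfolding angle_partial_def angle_self_partial_def Let_def A_def[symmetric] B_def[symmetric]
      C_def[symmetric] d_def[symmetric]
    using \<open>d > 0\<close> by (simp add: abs_divide)
qed

definition face_jacobian :: "('n set \<Rightarrow> real) \<Rightarrow> real^'n \<Rightarrow> 'n set \<Rightarrow> 'n \<Rightarrow> 'n \<Rightarrow> real" where
  "face_jacobian l0 w f i m =
     (if m \<notin> f then 0
      else if m = i then \<Sum>j\<in>f - {i}. angle_self_partial l0 w i j (third_vertex f i j)
      else angle_partial l0 w i m (third_vertex f i m))"

lemma face_jacobian_commute:
  assumes "i \<in> f" "m \<in> f"
  shows "face_jacobian l0 w f m i = face_jacobian l0 w f i m"
  using assms by (simp add: face_jacobian_def third_vertex_commute angle_partial_commute)

lemma theta_has_derivative: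
  fixes w :: "real^'n"
  assumes "card f = 3" "i \<in> f" and admissible: "\<forall>a\<in>f. \<forall>b\<in>f. a \<noteq> b \<longrightarrow> admissible_edge l0 w a b"
  shows "((\<lambda>w. theta l0 w f i) has_derivative (\<lambda>h. \<Sum>m\<in>UNIV. face_jacobian l0 w f i m * h$m)) (at w)"
proof -
  obtain j k where f: "f = {i, j, k}" "distinct [i, j, k]" using triangle_at_vertex assms(1,2) .
  have third: "third_vertex f i j = k" "third_vertex f i k = j"
    using f third_vertex_eq[of i j k] third_vertex_eq[of i k j] by (auto simp: insert_commute)
  have "(\<Sum>m\<in>UNIV. face_jacobian l0 w f i m * h$m) = (\<Sum>m\<in>f. face_jacobian l0 w f i m * h$m)" for h
    by (rule sum.mono_neutral_right) (auto simp: face_jacobian_def)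
  also have "(\<Sum>m\<in>f. face_jacobian l0 w f i m * h$m)
      = (angle_self_partial l0 w i j k + angle_self_partial l0 w i k j) * h$i
        + angle_partial l0 w i j k * h$j + angle_partial l0 w i k j * h$k" for h
  proof -
    have "f - {i} = {j, k}" using f by auto
    then have "face_jacobian l0 w f i i = angle_self_partial l0 w i j k + angle_self_partial l0 w i k j"
      using f third by (simp add: face_jacobian_def)
    moreover have "face_jacobian l0 w f i j = angle_partial l0 w i j k"
      "face_jacobian l0 w f i k = angle_partial l0 w i k j"
      using f third by (auto simp: face_jacobian_def)
    ultimately show ?thesis using f by (simp add: algebra_simps)
  qed
  finally have jacobian_row: "(\<lambda>h. \<Sum>m\<in>UNIV. face_jacobian l0 w f i m * h$m)
      = (\<lambda>h. (angle_self_partial l0 w i j k + angle_self_partial l0 w i k j) * h$i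
        + angle_partial l0 w i j k * h$j + angle_partial l0 w i k j * h$k)" by (rule ext)
  have "admissible_edge l0 w i j" "admissible_edge l0 w j k" "admissible_edge l0 w k i"
    using admissible f by auto
  then show ?thesis
    unfolding jacobian_row theta_eq_face_angle[OF f] by (rule face_angle_has_derivative)
qed

lemma face_jacobian_row_dominant:
  assumes "card f = 3" "i \<in> f" and admissible: "\<forall>a\<in>f. \<forall>b\<in>f. a \<noteq> b \<longrightarrow> admissible_edge l0 w a b"
  shows "(\<Sum>m\<in>UNIV - {i}. \<bar>face_jacobian l0 w f i m\<bar>) < - face_jacobian l0 w f i i"
proof -
  have "(\<Sum>m\<in>UNIV - {i}. \<bar>face_jacobian l0 w f i m\<bar>)
      = (\<Sum>m\<in>f - {i}. \<bar>angle_partial l0 w i m (third_vertex f i m)\<bar>)"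
    by (rule sum.mono_neutral_cong_right) (auto simp: face_jacobian_def)
  also have "\<dots> < (\<Sum>m\<in>f - {i}. - angle_self_partial l0 w i m (third_vertex f i m))"
  proof (rule sum_strict_mono)
    obtain j k where "f = {i, j, k}" "distinct [i, j, k]" using triangle_at_vertex assms(1,2) .
    then show "finite (f - {i})" "f - {i} \<noteq> {}" by auto
  next
    fix m assume "m \<in> f - {i}"
    define k where "k = third_vertex f i m"
    have "f = {i, m, k}" "distinct [i, m, k]"
      using triangle_third_vertex[OF assms(1,2), of m] \<open>m \<in> f - {i}\<close> unfolding k_def[symmetric] by auto
    then have "admissible_edge l0 w i m" "admissible_edge l0 w m k" "admissible_edge l0 w k i"
      using admissible by auto
    then show "\<bar>angle_partial l0 w i m (third_vertex f i m)\<bar>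
        < - angle_self_partial l0 w i m (third_vertex f i m)"
      unfolding k_def[symmetric] by (rule angle_partial_dominated)
  qed
  also have "\<dots> = - face_jacobian l0 w f i i"
    using assms(2) by (simp add: face_jacobian_def sum_negf)
  finally show ?thesis .
qed

definition jacobian :: "'n set set \<Rightarrow> ('n set \<Rightarrow> real) \<Rightarrow> real^'n \<Rightarrow> real^'n^'n" where
  "jacobian F l0 w = (\<chi> i m. \<Sum>f\<in>{f\<in>F. i \<in> f}. face_jacobian l0 w f i m)"

lemma jacobian_nth: "jacobian F l0 w $ i $ m = (\<Sum>f\<in>{f\<in>F. i \<in> f}. face_jacobian l0 w f i m)"
  unfolding jacobian_def by simp

lemma Bvec_has_derivative:
  fixes F :: "'n::finite set set" and w :: "real^'n"
  assumes "\<forall>f\<in>F. card f = 3" "\<forall>f\<in>F. \<forall>a\<in>f. \<forall>b\<in>f. a \<noteq> b \<longrightarrow> admissible_edge l0 w a b"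
  shows "(Bvec F l0 has_derivative (\<lambda>h. jacobian F l0 w *v h)) (at w)"
proof (rule has_derivative_vec_componentwise)
  fix i
  have "((\<lambda>w. \<Sum>f\<in>{f\<in>F. i \<in> f}. theta l0 w f i) has_derivative
          (\<lambda>h. \<Sum>f\<in>{f\<in>F. i \<in> f}. \<Sum>m\<in>UNIV. face_jacobian l0 w f i m * h$m)) (at w)"
    using assms by (intro has_derivative_sum theta_has_derivative) auto
  moreover have "(\<lambda>h. \<Sum>f\<in>{f\<in>F. i \<in> f}. \<Sum>m\<in>UNIV. face_jacobian l0 w f i m * h$m)
      = (\<lambda>h. (jacobian F l0 w *v h) $ i)"
    unfolding matrix_vector_mult_def vec_lambda_beta jacobian_nth sum_distrib_right by (rule ext, rule sum.swap)
  ultimately show "((\<lambda>w. Bvec F l0 w $ i) has_derivative (\<lambda>h. (jacobian F l0 w *v h) $ i)) (at w)"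
    by (simp add: Bvec_def)
qed

lemma jacobian_symmetric: "transpose (jacobian F l0 w) = jacobian F l0 w"
proof -
  have entry: "jacobian F l0 w $ i $ m = (\<Sum>f\<in>{f\<in>F. i \<in> f \<and> m \<in> f}. face_jacobian l0 w f i m)"
    for i m
    unfolding jacobian_nth by (rule sum.mono_neutral_right) (auto simp: face_jacobian_def)
  have "jacobian F l0 w $ m $ i = jacobian F l0 w $ i $ m" for i m
  proof -
    have "{f\<in>F. m \<in> f \<and> i \<in> f} = {f\<in>F. i \<in> f \<and> m \<in> f}" by auto
    then show ?thesis unfolding entry by (auto intro!: sum.cong face_jacobian_commute)
  qed
  then show ?thesis by (simp add: transpose_def vec_eq_iff)
qed

lemma jacobian_row_dominant:
  fixes F :: "'n::finite set set"
  assumes "\<forall>f\<in>F. card f = 3" "\<forall>f\<in>F. \<forall>a\<in>f. \<forall>b\<in>f. a \<noteq> b \<longrightarrow> admissible_edge l0 w a b"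
    and "\<exists>f\<in>F. i \<in> f"
  shows "jacobian F l0 w $ i $ i + (\<Sum>j\<in>UNIV - {i}. \<bar>jacobian F l0 w $ i $ j\<bar>) < 0"
proof -
  have "(\<Sum>j\<in>UNIV - {i}. \<bar>jacobian F l0 w $ i $ j\<bar>)
      \<le> (\<Sum>j\<in>UNIV - {i}. \<Sum>f\<in>{f\<in>F. i \<in> f}. \<bar>face_jacobian l0 w f i j\<bar>)"
    unfolding jacobian_nth by (intro sum_mono sum_abs)
  also have "\<dots> = (\<Sum>f\<in>{f\<in>F. i \<in> f}. \<Sum>j\<in>UNIV - {i}. \<bar>face_jacobian l0 w f i j\<bar>)"
    by (rule sum.swap)
  also have "\<dots> < (\<Sum>f\<in>{f\<in>F. i \<in> f}. - face_jacobian l0 w f i i)"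
    using assms by (intro sum_strict_mono face_jacobian_row_dominant) auto
  also have "\<dots> = - jacobian F l0 w $ i $ i"
    by (simp add: jacobian_nth sum_negf)
  finally show ?thesis by simp
qed

theorem lemma3p1:
  fixes E F :: "'n::finite set set" and l0 :: "'n set \<Rightarrow> real" and w :: "real^'n"
  assumes "closed_surface_triangulation E F"
    and "\<forall>e\<in>E. l0 e > 0"
    and "w \<in> Wdom E l0"
  shows "\<exists>L :: real^'n^'n.
           (Bvec F l0 has_derivative (\<lambda>h. L *v h)) (at w) \<and>
           transpose L = L \<and>
           (\<forall>i. \<bar>L$i$i\<bar> > (\<Sum>j\<in>UNIV - {i}. \<bar>L$i$j\<bar>)) \<and>
           (\<forall>x. x \<noteq> 0 \<longrightarrow> x \<bullet> (L *v x) < 0)"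
proof -
  have faces: "\<forall>f\<in>F. card f = 3" and covered: "\<And>i. \<exists>f\<in>F. i \<in> f"
    and edges: "\<And>f a b. f \<in> F \<Longrightarrow> a \<in> f \<Longrightarrow> b \<in> f \<Longrightarrow> a \<noteq> b \<Longrightarrow> {a, b} \<in> E"
    using assms(1) unfolding closed_surface_triangulation_def by auto
  have admissible: "\<forall>f\<in>F. \<forall>a\<in>f. \<forall>b\<in>f. a \<noteq> b \<longrightarrow> admissible_edge l0 w a b"
    using Wdom_imp_admissible_edge[OF assms(3)] edges by blast
  define L where "L = jacobian F l0 w"
  have row: "L$i$i + (\<Sum>j\<in>UNIV - {i}. \<bar>L$i$j\<bar>) < 0" for i
    unfolding L_def using faces admissible covered by (rule jacobian_row_dominant)
  have sym: "transpose L = L"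
    unfolding L_def by (rule jacobian_symmetric)
  have "(Bvec F l0 has_derivative (\<lambda>h. L *v h)) (at w)"
    unfolding L_def using faces admissible by (rule Bvec_has_derivative)
  moreover have "\<bar>L$i$i\<bar> > (\<Sum>j\<in>UNIV - {i}. \<bar>L$i$j\<bar>)" for i
  proof -
    have "(\<Sum>j\<in>UNIV - {i}. \<bar>L$i$j\<bar>) \<ge> 0" by (simp add: sum_nonneg)
    then show ?thesis using row[of i] by (simp add: abs_if)
  qed
  moreover have "x \<bullet> (L *v x) < 0" if "x \<noteq> 0" for x
    using sym row that by (rule symmetric_diag_dominant_neg_definite)
  ultimately show ?thesis using sym by blast
qed

end
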